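(* Let $n,k,t$ be positive integers with $k<n$, $q$ a prime power, and $\mathcal{D}$ the Desarguesian $(t-1)$-spread of $\mathrm{PG}(nt-1,q)$. Let $\Omega$ be an $(nt-kt-2)$-dimensional subspace of $\mathrm{PG}(nt-1,q)$, let $\Gamma$ be a plane skew from $\Omega$, let $\bar{B}$ be a blocking set (with respect to lines) of the plane $\Gamma$, and let $K$ be the cone with vertex $\Omega$ and base $\bar{B}$. Then $\mathcal{B}(K)$ is a blocking set with respect to $(k-1)$-dimensional subspaces of $\mathrm{PG}(n-1,q^t)$.
   Context: Field reduction: each point of $\mathrm{PG}(n-1,q^t)$ corresponds to a $(t-1)$-dimensional subspace of $\mathrm{PG}(nt-1,q)$ (the $1$-dimensional $\mathbb{F}_{q^t}$-subspace viewed over $\mathbb{F}_q$); these form the Desarguesian $(t-1)$-spread $\mathcal{D}$. For $U\subseteq\mathrm{PG}(nt-1,q)$, $\mathcal{B}(U)$ is the set of elements of $\mathcal{D}$ meeting $U$, identified with points of $\mathrm{PG}(n-1,q^t)$. The cone with vertex $\Omega$ and base $\bar{B}$ (in a subspace skew from $\Omega$) is $\bigcup_{P\in\bar B}\langle P,\Omega\rangle$. A blocking set with respect to $j$-spaces is a point set meeting every $j$-dimensional subspace. *)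

theory Defs
  imports "HOL-Computational_Algebra.Primes"
begin

(* Model.  'a is the field F_{q^t}; K \<subseteq> 'a is the subfield F_q.
   Vectors of F_{q^t}^n are functions nat \<Rightarrow> 'a vanishing outside {0..<n}.
   Viewed over K this is the nt-dimensional F_q-space underlying PG(nt-1,q);
   viewed over UNIV (= F_{q^t}) it is the n-dimensional space underlying PG(n-1,q^t).
   A projective subspace of projective dimension m is a linear subspace of
   vector dimension m+1; a point is a 1-dimensional linear subspace. *)

definition vecs :: "nat \<Rightarrow> (nat \<Rightarrow> 'a::zero) set" where
  "vecs n = {v. \<forall>i\<ge>n. v i = 0}"

definition is_subfield :: "'a::field set \<Rightarrow> bool" where
  "is_subfield K \<longleftrightarrow> 0 \<in> K \<and> 1 \<in> K \<and>
     (\<forall>x\<in>K. \<forall>y\<in>K. x + y \<in> K \<and> x * y \<in> K) \<and>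
     (\<forall>x\<in>K. - x \<in> K \<and> inverse x \<in> K)"

definition prime_power :: "nat \<Rightarrow> bool" where
  "prime_power q \<longleftrightarrow> (\<exists>p m. prime p \<and> m > 0 \<and> q = p ^ m)"

definition Kspan :: "'a::field set \<Rightarrow> (nat \<Rightarrow> 'a) set \<Rightarrow> (nat \<Rightarrow> 'a) set" where
  "Kspan K S = {v. \<exists>F c. finite F \<and> F \<subseteq> S \<and> (\<forall>x\<in>F. c x \<in> K) \<and>
                        v = (\<lambda>i. \<Sum>x\<in>F. c x * x i)}"

definition Kindep :: "'a::field set \<Rightarrow> (nat \<Rightarrow> 'a) set \<Rightarrow> bool" where
  "Kindep K B \<longleftrightarrow> finite B \<and>
     (\<forall>c. (\<forall>x\<in>B. c x \<in> K) \<and> (\<lambda>i. \<Sum>x\<in>B. c x * x i) = (\<lambda>_. 0) \<longrightarrow> (\<forall>x\<in>B. c x = 0))"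

definition Ksub :: "'a::field set \<Rightarrow> nat \<Rightarrow> (nat \<Rightarrow> 'a) set \<Rightarrow> nat \<Rightarrow> bool" where
  "Ksub K n W d \<longleftrightarrow> (\<exists>B. B \<subseteq> vecs n \<and> Kindep K B \<and> card B = d \<and> Kspan K B = W)"

definition Kpoints :: "'a::field set \<Rightarrow> nat \<Rightarrow> (nat \<Rightarrow> 'a) set set" where
  "Kpoints K n = {P. Ksub K n P 1}"

(* point set of a projective space meeting every subspace of vector dimension d
   (i.e. a blocking set w.r.t. (d-1)-dimensional subspaces) contained in ambient W0 *)
definition blocking_in :: "'a::field set \<Rightarrow> nat \<Rightarrow> (nat \<Rightarrow> 'a) set \<Rightarrow> nat \<Rightarrow> (nat \<Rightarrow> 'a) set set \<Rightarrow> bool" where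
  "blocking_in K n W0 d B \<longleftrightarrow> B \<subseteq> {P \<in> Kpoints K n. P \<subseteq> W0} \<and>
     (\<forall>W. Ksub K n W d \<and> W \<subseteq> W0 \<longrightarrow> (\<exists>P\<in>B. P \<subseteq> W))"

definition cone :: "'a::field set \<Rightarrow> nat \<Rightarrow> (nat \<Rightarrow> 'a) set \<Rightarrow> (nat \<Rightarrow> 'a) set set \<Rightarrow> (nat \<Rightarrow> 'a) set set" where
  "cone K n Omega Bbar = {X \<in> Kpoints K n. \<exists>P\<in>Bbar. X \<subseteq> Kspan K (P \<union> Omega)}"

(* field reduction: elements of the Desarguesian spread (= points of PG(n-1,q^t),
   i.e. 1-dimensional F_{q^t}-subspaces) meeting a point set U of PG(nt-1,q) *)
definition BU :: "nat \<Rightarrow> (nat \<Rightarrow> 'a::field) set set \<Rightarrow> (nat \<Rightarrow> 'a) set set" where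
  "BU n U = {X \<in> Kpoints UNIV n. \<exists>P\<in>U. P \<subseteq> X}"

end

(* Let W be a k-dimensional F_{q^t}-subspace, i.e. a kt-dimensional F_q-subspace of V = F_{q^t}^n.
   If W meets the vertex Omega nontrivially, a nonzero vector of W \<inter> Omega lies in the cone.
   Otherwise |W + Omega| = |W| |Omega| = q^(nt-1), and the product formula
   |A + B| |A \<inter> B| = |A| |B| for subgroups gives |Gamma \<inter> (W + Omega)| >= |Gamma| |W + Omega| / |V| = q^2.
   So Gamma \<inter> (W + Omega) contains a line, hence a point P of the blocking set Bbar.
   Writing a nonzero p in P as w + v with w in W and v in Omega, the vector w is nonzero and lies
   in <P, Omega>, so its F_{q^t}-span is a point of B(K) inside W. *)

theory Submission
  imports Defs "HOL-Library.Function_Algebras" "HOL-Library.Set_Algebras" "HOL-Library.FuncSet"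
begin

lemma is_subfieldD:
  assumes "is_subfield K"
  shows "0 \<in> K" "1 \<in> K" "x \<in> K \<Longrightarrow> y \<in> K \<Longrightarrow> x + y \<in> K" "x \<in> K \<Longrightarrow> y \<in> K \<Longrightarrow> x * y \<in> K"
    "x \<in> K \<Longrightarrow> - x \<in> K" "x \<in> K \<Longrightarrow> inverse x \<in> K"
    and subfield_diff: "x \<in> K \<Longrightarrow> y \<in> K \<Longrightarrow> x - y \<in> K"
    and subfield_divide: "x \<in> K \<Longrightarrow> y \<in> K \<Longrightarrow> x / y \<in> K"
  using assms unfolding is_subfield_def diff_conv_add_uminus divide_inverse by blast+

lemma is_subfield_UNIV: "is_subfield UNIV"
  unfolding is_subfield_def by simp

lemma card_subfield_ge_2:
  fixes K :: "'a::field set"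
  assumes "is_subfield K" "finite K"
  shows "2 \<le> card K"
proof -
  have "{0, 1} \<subseteq> K" using is_subfieldD(1,2)[OF assms(1)] by blast
  then have "card {0, 1 :: 'a} \<le> card K" by (rule card_mono[OF assms(2)])
  then show ?thesis by simp
qed

section \<open>Product formula for subgroups\<close>

definition add_subgroup :: "'g::ab_group_add set \<Rightarrow> bool" where
  "add_subgroup A \<longleftrightarrow> 0 \<in> A \<and> (\<forall>x\<in>A. \<forall>y\<in>A. x + y \<in> A) \<and> (\<forall>x\<in>A. - x \<in> A)"

lemma add_subgroupD:
  assumes "add_subgroup A"
  shows "0 \<in> A" "x \<in> A \<Longrightarrow> y \<in> A \<Longrightarrow> x + y \<in> A" "x \<in> A \<Longrightarrow> - x \<in> A"
    and add_subgroup_diff: "x \<in> A \<Longrightarrow> y \<in> A \<Longrightarrow> x - y \<in> A"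
  using assms unfolding add_subgroup_def diff_conv_add_uminus by blast+

lemma card_set_plus_fibre:
  assumes "add_subgroup A" "add_subgroup B" "a \<in> A" "b \<in> B"
  shows "card {p \<in> A \<times> B. fst p + snd p = a + b} = card (A \<inter> B)"
proof -
  have "{p \<in> A \<times> B. fst p + snd p = a + b} = (\<lambda>c. (a + c, b - c)) ` (A \<inter> B)"
  proof (intro equalityI subsetI)
    fix p assume "p \<in> {p \<in> A \<times> B. fst p + snd p = a + b}"
    then obtain x y where p: "p = (x, y)" "x \<in> A" "y \<in> B" "x + y = a + b" by auto
    have "x - a = b - y" using p(4) by (simp add: algebra_simps)
    moreover have "x - a \<in> A" "b - y \<in> B"
      using add_subgroup_diff assms p(2,3) by blast+
    moreover have "p = (a + (x - a), b - (x - a))" using p by (simp add: algebra_simps)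
    ultimately show "p \<in> (\<lambda>c. (a + c, b - c)) ` (A \<inter> B)" by (intro image_eqI) auto
  next
    fix p assume "p \<in> (\<lambda>c. (a + c, b - c)) ` (A \<inter> B)"
    then obtain c where c: "c \<in> A \<inter> B" "p = (a + c, b - c)" by blast
    moreover have "a + c \<in> A" "b - c \<in> B"
      using c(1) add_subgroupD(2) add_subgroup_diff assms by blast+
    ultimately show "p \<in> {p \<in> A \<times> B. fst p + snd p = a + b}" by simp
  qed
  moreover have "inj_on (\<lambda>c. (a + c, b - c)) (A \<inter> B)" by (rule inj_onI) simp
  ultimately show ?thesis by (simp add: card_image)
qed

lemma card_set_plus_mult_card_Int:
  assumes "add_subgroup A" "add_subgroup B" "finite A" "finite B"
  shows "card (A + B) * card (A \<inter> B) = card A * card B"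
proof -
  have "{s \<in> A + B. fst p + snd p = s} = {fst p + snd p}" if "p \<in> A \<times> B" for p
    using that by (auto intro: set_plus_intro)
  then have "card A * card B = (\<Sum>p\<in>A \<times> B. card {s \<in> A + B. fst p + snd p = s})"
    by (simp add: card_cartesian_product)
  also have "\<dots> = card (A \<inter> B) * card (A + B)"
  proof (rule sum_multicount)
    show "\<forall>s\<in>A + B. card {p \<in> A \<times> B. fst p + snd p = s} = card (A \<inter> B)"
      using assms(1,2) card_set_plus_fibre by (blast elim: set_plus_elim)
  qed (use assms in \<open>simp_all add: finite_set_plus\<close>)
  finally show ?thesis by simp
qed

lemma card_mult_le_card_Int:
  assumes "add_subgroup A" "add_subgroup B" "finite A" "finite B" "finite C" "A + B \<subseteq> C"
  shows "card A * card B \<le> card C * card (A \<inter> B)"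
  using card_set_plus_mult_card_Int[OF assms(1-4)] card_mono[OF assms(5,6)] by (metis mult_le_mono1)

lemma card_set_plus_Int_zero:
  assumes "add_subgroup A" "add_subgroup B" "finite A" "finite B" "A \<inter> B = {0}"
  shows "card (A + B) = card A * card B"
  using card_set_plus_mult_card_Int[OF assms(1-4)] assms(5) by simp

definition Ksubspace :: "'a::field set \<Rightarrow> (nat \<Rightarrow> 'a) set \<Rightarrow> bool" where
  "Ksubspace K S \<longleftrightarrow> 0 \<in> S \<and> (\<forall>v\<in>S. \<forall>w\<in>S. v + w \<in> S) \<and> (\<forall>c\<in>K. \<forall>v\<in>S. (\<lambda>i. c * v i) \<in> S)"

lemma KsubspaceD:
  assumes "Ksubspace K S"
  shows "0 \<in> S" "v \<in> S \<Longrightarrow> w \<in> S \<Longrightarrow> v + w \<in> S" "c \<in> K \<Longrightarrow> v \<in> S \<Longrightarrow> (\<lambda>i. c * v i) \<in> S"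
  using assms unfolding Ksubspace_def by auto

lemma Ksubspace_add_subgroup:
  assumes "is_subfield K" "Ksubspace K S"
  shows "add_subgroup S"
proof -
  have "- v \<in> S" if "v \<in> S" for v
  proof -
    have "(\<lambda>i. (- 1) * v i) \<in> S"
      using KsubspaceD(3)[OF assms(2) _ that] is_subfieldD(2,5)[OF assms(1)] by blast
    then show ?thesis by (simp add: fun_Compl_def)
  qed
  then show ?thesis using KsubspaceD(1,2)[OF assms(2)] unfolding add_subgroup_def by blast
qed

lemma Ksubspace_subfield_mono: "Ksubspace UNIV S \<Longrightarrow> Ksubspace K S"
  unfolding Ksubspace_def by blast

lemma Ksubspace_Int: "Ksubspace K A \<Longrightarrow> Ksubspace K B \<Longrightarrow> Ksubspace K (A \<inter> B)"
  unfolding Ksubspace_def by blast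

lemma Ksubspace_set_plus:
  assumes A: "Ksubspace K A" and B: "Ksubspace K B"
  shows "Ksubspace K (A + B)"
  unfolding Ksubspace_def
proof (intro conjI ballI)
  show "0 \<in> A + B"
    using set_plus_intro[OF KsubspaceD(1)[OF A] KsubspaceD(1)[OF B]] by simp
next
  fix v w assume "v \<in> A + B" "w \<in> A + B"
  then obtain a b a' b' where ab: "a \<in> A" "b \<in> B" "a' \<in> A" "b' \<in> B" "v = a + b" "w = a' + b'"
    by (auto elim!: set_plus_elim)
  have "(a + a') + (b + b') \<in> A + B"
    using ab KsubspaceD(2)[OF A] KsubspaceD(2)[OF B] by (intro set_plus_intro)
  then show "v + w \<in> A + B" using ab(5,6) by (simp add: algebra_simps)
next
  fix c v assume c: "c \<in> K" and "v \<in> A + B"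
  then obtain a b where ab: "a \<in> A" "b \<in> B" "v = a + b" by (auto elim!: set_plus_elim)
  have "(\<lambda>i. c * a i) + (\<lambda>i. c * b i) \<in> A + B"
    using ab c KsubspaceD(3)[OF A] KsubspaceD(3)[OF B] by (intro set_plus_intro)
  then show "(\<lambda>i. c * v i) \<in> A + B" using ab(3) by (simp add: plus_fun_def algebra_simps)
qed

lemma Ksubspace_vecs: "Ksubspace K (vecs n)"
  unfolding Ksubspace_def vecs_def by simp

lemma set_plus_vecs:
  fixes A B :: "(nat \<Rightarrow> 'a::monoid_add) set"
  assumes "A \<subseteq> vecs n" "B \<subseteq> vecs n"
  shows "A + B \<subseteq> vecs n"
proof
  fix x assume "x \<in> A + B"
  then obtain a b where "x = a + b" "a \<in> vecs n" "b \<in> vecs n"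
    using assms by (auto elim!: set_plus_elim)
  then show "x \<in> vecs n" by (simp add: vecs_def)
qed

lemma finite_vecs: "finite (vecs n :: (nat \<Rightarrow> 'a::{zero,finite}) set)"
  and card_vecs_le: "card (vecs n :: (nat \<Rightarrow> 'a::{zero,finite}) set) \<le> card (UNIV :: 'a set) ^ n"
proof -
  have inj: "inj_on (\<lambda>v. restrict v {..<n}) (vecs n :: (nat \<Rightarrow> 'a) set)"
  proof (rule inj_onI, rule ext)
    fix v w :: "nat \<Rightarrow> 'a" and i
    assume "v \<in> vecs n" "w \<in> vecs n" "restrict v {..<n} = restrict w {..<n}"
    then show "v i = w i"
      unfolding vecs_def by (cases "i < n") (auto dest: fun_cong[where x = i])
  qed
  have fin: "finite ({..<n} \<rightarrow>\<^sub>E (UNIV :: 'a set))" by (intro finite_PiE) auto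
  have into: "(\<lambda>v. restrict v {..<n}) ` vecs n \<subseteq> {..<n} \<rightarrow>\<^sub>E (UNIV :: 'a set)"
    by (rule image_subsetI, rule iffD2[OF restrict_PiE_iff]) simp
  show "finite (vecs n :: (nat \<Rightarrow> 'a) set)"
    using inj finite_subset[OF into fin] by (blast dest: finite_imageD)
  show "card (vecs n :: (nat \<Rightarrow> 'a) set) \<le> card (UNIV :: 'a set) ^ n"
    using card_inj_on_le[OF inj into fin] by (simp add: card_PiE)
qed

lemma Kspan_superset:
  assumes "1 \<in> K"
  shows "S \<subseteq> Kspan K S"
proof
  fix x assume "x \<in> S"
  then show "x \<in> Kspan K S"
    unfolding Kspan_def using assms by (intro CollectI exI[of _ "{x}"] exI[of _ "\<lambda>_. 1"]) auto
qed

lemma Kspan_empty: "Kspan K {} = {0}"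
  unfolding Kspan_def by (auto simp: zero_fun_def)

lemma Kspan_subfield_mono: "Kspan K S \<subseteq> Kspan UNIV S"
  unfolding Kspan_def by blast

lemma sum_extend_coeffs:
  fixes c :: "(nat \<Rightarrow> 'a::semiring_0) \<Rightarrow> 'a"
  assumes "finite G" "F \<subseteq> G"
  shows "(\<Sum>x\<in>G. (if x \<in> F then c x else 0) * x i) = (\<Sum>x\<in>F. c x * x i)"
  by (rule sum.mono_neutral_cong_right) (use assms in auto)

lemma Ksubspace_Kspan:
  assumes K: "is_subfield K"
  shows "Ksubspace K (Kspan K S)"
  unfolding Ksubspace_def
proof (intro conjI ballI)
  show "0 \<in> Kspan K S"
    unfolding Kspan_def by (intro CollectI exI[of _ "{}"]) (simp add: zero_fun_def)
next
  fix v w assume "v \<in> Kspan K S" "w \<in> Kspan K S"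
  then obtain F1 c1 F2 c2 where
    F1: "finite F1" "F1 \<subseteq> S" "\<forall>x\<in>F1. c1 x \<in> K" "v = (\<lambda>i. \<Sum>x\<in>F1. c1 x * x i)" and
    F2: "finite F2" "F2 \<subseteq> S" "\<forall>x\<in>F2. c2 x \<in> K" "w = (\<lambda>i. \<Sum>x\<in>F2. c2 x * x i)"
    unfolding Kspan_def by blast
  define c where "c x = (if x \<in> F1 then c1 x else 0) + (if x \<in> F2 then c2 x else 0)" for x
  have "\<forall>x\<in>F1 \<union> F2. c x \<in> K"
    using F1(3) F2(3) is_subfieldD(1,3)[OF K] unfolding c_def by simp
  moreover have "v + w = (\<lambda>i. \<Sum>x\<in>F1 \<union> F2. c x * x i)"
  proof
    fix i
    have "(\<Sum>x\<in>F1 \<union> F2. c x * x i) =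
        (\<Sum>x\<in>F1 \<union> F2. (if x \<in> F1 then c1 x else 0) * x i) +
        (\<Sum>x\<in>F1 \<union> F2. (if x \<in> F2 then c2 x else 0) * x i)"
      unfolding c_def distrib_right by (rule sum.distrib)
    also have "\<dots> = v i + w i"
      using F1 F2 by (simp add: sum_extend_coeffs)
    finally show "(v + w) i = (\<Sum>x\<in>F1 \<union> F2. c x * x i)" by simp
  qed
  ultimately show "v + w \<in> Kspan K S"
    unfolding Kspan_def using F1(1,2) F2(1,2) by (intro CollectI exI[of _ "F1 \<union> F2"] exI[of _ c]) simp
next
  fix a v assume "a \<in> K" "v \<in> Kspan K S"
  then obtain F c where F: "finite F" "F \<subseteq> S" "\<forall>x\<in>F. c x \<in> K" "v = (\<lambda>i. \<Sum>x\<in>F. c x * x i)"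
    unfolding Kspan_def by blast
  have "\<forall>x\<in>F. a * c x \<in> K" using F(3) \<open>a \<in> K\<close> is_subfieldD(4)[OF K] by blast
  moreover have "(\<lambda>i. a * v i) = (\<lambda>i. \<Sum>x\<in>F. (a * c x) * x i)"
    using F(4) by (simp add: sum_distrib_left mult.assoc)
  ultimately show "(\<lambda>i. a * v i) \<in> Kspan K S"
    unfolding Kspan_def using F(1,2) by (intro CollectI exI[of _ F] exI[of _ "\<lambda>x. a * c x"]) simp
qed

lemma Kspan_least:
  assumes "Ksubspace K T" "B \<subseteq> T"
  shows "Kspan K B \<subseteq> T"
proof
  fix v assume "v \<in> Kspan K B"
  then obtain F c where F: "finite F" "F \<subseteq> B" "\<forall>x\<in>F. c x \<in> K" "v = (\<lambda>i. \<Sum>x\<in>F. c x * x i)"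
    unfolding Kspan_def by blast
  have "(\<lambda>i. \<Sum>x\<in>F. c x * x i) \<in> T"
    using F(1-3)
  proof (induction F rule: finite_induct)
    case empty
    then show ?case using KsubspaceD(1)[OF assms(1)] by (simp add: zero_fun_def)
  next
    case (insert a F)
    have "(\<lambda>i. \<Sum>x\<in>insert a F. c x * x i) = (\<lambda>i. c a * a i) + (\<lambda>i. \<Sum>x\<in>F. c x * x i)"
      using insert.hyps by (simp add: fun_eq_iff)
    then show ?case using insert assms KsubspaceD(2,3)[OF assms(1)] by auto
  qed
  then show "v \<in> T" using F(4) by simp
qed

lemma Kindep_empty: "Kindep K {}"
  unfolding Kindep_def by simp

lemma Kindep_insert:
  assumes K: "is_subfield K" and B: "Kindep K B" and b: "b \<notin> Kspan K B"
  shows "Kindep K (insert b B)"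
  unfolding Kindep_def
proof (intro conjI allI impI)
  have fin: "finite B" using B unfolding Kindep_def by blast
  have "b \<notin> B" using b Kspan_superset[OF is_subfieldD(2)[OF K]] by blast
  show "finite (insert b B)" using fin by simp
  fix c assume c: "(\<forall>x\<in>insert b B. c x \<in> K) \<and> (\<lambda>i. \<Sum>x\<in>insert b B. c x * x i) = (\<lambda>_. 0)"
  then have sum0: "c b * b i + (\<Sum>x\<in>B. c x * x i) = 0" for i
    using fin \<open>b \<notin> B\<close> by (auto dest: fun_cong[where x = i])
  have "c b = 0"
  proof (rule ccontr)
    assume "c b \<noteq> 0"
    then have "b = (\<lambda>i. \<Sum>x\<in>B. (- c x / c b) * x i)"
      using sum0 by (auto simp: fun_eq_iff sum_divide_distrib[symmetric] sum_negf field_simps eq_neg_iff_add_eq_0)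
    moreover have "\<forall>x\<in>B. - c x / c b \<in> K"
      using c subfield_divide[OF K] is_subfieldD(5)[OF K] by simp
    ultimately have "b \<in> Kspan K B"
      unfolding Kspan_def using fin by (intro CollectI exI[of _ B] exI[of _ "\<lambda>x. - c x / c b"]) simp
    then show False using b by contradiction
  qed
  then have "(\<lambda>i. \<Sum>x\<in>B. c x * x i) = (\<lambda>_. 0)" using sum0 by simp
  then have "\<forall>x\<in>B. c x = 0" using B c unfolding Kindep_def by blast
  then show "\<forall>x\<in>insert b B. c x = 0" using \<open>c b = 0\<close> by blast
qed

lemma Kspan_eq_coeffs_image:
  assumes "finite B" "0 \<in> K"
  shows "Kspan K B = (\<lambda>c i. \<Sum>x\<in>B. c x * x i) ` (B \<rightarrow>\<^sub>E K)"
proof (intro equalityI subsetI)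
  fix v assume "v \<in> Kspan K B"
  then obtain F c where F: "finite F" "F \<subseteq> B" "\<forall>x\<in>F. c x \<in> K" "v = (\<lambda>i. \<Sum>x\<in>F. c x * x i)"
    unfolding Kspan_def by blast
  define c' where "c' = restrict (\<lambda>x. if x \<in> F then c x else 0) B"
  have "c' \<in> B \<rightarrow>\<^sub>E K" unfolding c'_def restrict_PiE_iff using F(3) assms(2) by simp
  moreover have "v = (\<lambda>i. \<Sum>x\<in>B. c' x * x i)"
  proof
    fix i
    have "(\<Sum>x\<in>B. c' x * x i) = (\<Sum>x\<in>B. (if x \<in> F then c x else 0) * x i)"
      unfolding c'_def by (rule sum.cong) simp_all
    also have "\<dots> = v i" using sum_extend_coeffs[OF assms(1) F(2)] F(4) by simp
    finally show "v i = (\<Sum>x\<in>B. c' x * x i)" by simp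
  qed
  ultimately show "v \<in> (\<lambda>c i. \<Sum>x\<in>B. c x * x i) ` (B \<rightarrow>\<^sub>E K)" by blast
next
  fix v assume "v \<in> (\<lambda>c i. \<Sum>x\<in>B. c x * x i) ` (B \<rightarrow>\<^sub>E K)"
  then obtain c where "c \<in> B \<rightarrow>\<^sub>E K" "v = (\<lambda>i. \<Sum>x\<in>B. c x * x i)" by blast
  then show "v \<in> Kspan K B"
    unfolding Kspan_def using assms(1) by (intro CollectI exI[of _ B] exI[of _ c]) auto
qed

lemma inj_on_coeffs:
  assumes K: "is_subfield K" and B: "Kindep K B"
  shows "inj_on (\<lambda>c i. \<Sum>x\<in>B. c x * x i) (B \<rightarrow>\<^sub>E K)"
proof (rule inj_onI)
  fix c c' assume c: "c \<in> B \<rightarrow>\<^sub>E K" and c': "c' \<in> B \<rightarrow>\<^sub>E K"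
    and eq: "(\<lambda>i. \<Sum>x\<in>B. c x * x i) = (\<lambda>i. \<Sum>x\<in>B. c' x * x i)"
  have "\<forall>x\<in>B. c x - c' x \<in> K"
    using PiE_mem[OF c] PiE_mem[OF c'] subfield_diff[OF K] by blast
  moreover have "(\<lambda>i. \<Sum>x\<in>B. (c x - c' x) * x i) = (\<lambda>_. 0)"
  proof
    fix i
    show "(\<Sum>x\<in>B. (c x - c' x) * x i) = 0"
      using fun_cong[OF eq, of i] by (simp add: left_diff_distrib sum_subtractf)
  qed
  ultimately have "\<forall>x\<in>B. c x - c' x = 0"
    using B unfolding Kindep_def by (elim conjE allE[of _ "\<lambda>x. c x - c' x"]) blast
  then show "c = c'" by (intro PiE_ext[OF c c']) simp
qed

lemma card_Kspan:
  assumes "is_subfield K" "Kindep K B"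
  shows "card (Kspan K B) = card K ^ card B"
proof -
  have "finite B" using assms(2) unfolding Kindep_def by blast
  then have "Kspan K B = (\<lambda>c i. \<Sum>x\<in>B. c x * x i) ` (B \<rightarrow>\<^sub>E K)"
    by (rule Kspan_eq_coeffs_image[OF _ is_subfieldD(1)[OF assms(1)]])
  then have "card (Kspan K B) = card (B \<rightarrow>\<^sub>E K)"
    using card_image[OF inj_on_coeffs[OF assms]] by simp
  also have "\<dots> = card K ^ card B" using \<open>finite B\<close> by (simp add: card_PiE)
  finally show ?thesis .
qed

lemma exists_Kindep_subset:
  assumes K: "is_subfield K" "finite K" and S: "Ksubspace K S" and card: "card K ^ d \<le> card S"
  shows "\<exists>B \<subseteq> S. Kindep K B \<and> card B = d"
  using card
proof (induction d)
  case 0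
  show ?case by (intro exI[of _ "{}"]) (simp add: Kindep_empty)
next
  case (Suc d)
  have grow: "card K ^ d < card K ^ Suc d" using card_subfield_ge_2[OF K] by simp
  then obtain B where B: "B \<subseteq> S" "Kindep K B" "card B = d"
    using Suc by (meson less_imp_le order_trans)
  have span: "card (Kspan K B) = card K ^ d" using card_Kspan[OF K(1) B(2)] B(3) by simp
  then have fin: "finite (Kspan K B)" using card_subfield_ge_2[OF K] by (intro card_ge_0_finite) simp
  have "\<not> S \<subseteq> Kspan K B"
  proof
    assume "S \<subseteq> Kspan K B"
    then have "card S \<le> card (Kspan K B)" by (rule card_mono[OF fin])
    then show False using span grow Suc.prems by linarith
  qed
  then obtain b where b: "b \<in> S" "b \<notin> Kspan K B" by blast
  have "b \<notin> B" using b(2) Kspan_superset[OF is_subfieldD(2)[OF K(1)]] by blast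
  have "Kindep K (insert b B)" by (rule Kindep_insert[OF K(1) B(2) b(2)])
  moreover have "card (insert b B) = Suc d" using B(2,3) \<open>b \<notin> B\<close> unfolding Kindep_def by simp
  moreover have "insert b B \<subseteq> S" using B(1) b(1) by simp
  ultimately show ?case by blast
qed

lemma exists_Ksub_subset:
  assumes "is_subfield K" "finite K" "Ksubspace K S" "S \<subseteq> vecs n" "card K ^ d \<le> card S"
  shows "\<exists>L. Ksub K n L d \<and> L \<subseteq> S"
proof -
  obtain B where B: "B \<subseteq> S" "Kindep K B" "card B = d" using exists_Kindep_subset assms by blast
  have "Ksub K n (Kspan K B) d"
    unfolding Ksub_def using B assms(4) by (intro exI[of _ B]) auto
  moreover have "Kspan K B \<subseteq> S" by (rule Kspan_least[OF assms(3) B(1)])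
  ultimately show ?thesis by blast
qed

lemma Ksub_Ksubspace: "is_subfield K \<Longrightarrow> Ksub K n W d \<Longrightarrow> Ksubspace K W"
  unfolding Ksub_def by (auto intro: Ksubspace_Kspan)

lemma Ksub_subset_vecs: "Ksub K n W d \<Longrightarrow> W \<subseteq> vecs n"
  unfolding Ksub_def by (auto dest: Kspan_least[OF Ksubspace_vecs])

lemma card_Ksub: "is_subfield K \<Longrightarrow> Ksub K n W d \<Longrightarrow> card W = card K ^ d"
  unfolding Ksub_def by (auto simp: card_Kspan)

lemma Kspan_singleton_in_Kpoints:
  assumes "is_subfield K" "w \<in> vecs n" "w \<noteq> 0"
  shows "Kspan K {w} \<in> Kpoints K n"
proof -
  have "Kindep K {w}" using Kindep_insert[OF assms(1) Kindep_empty] assms(3) by (simp add: Kspan_empty)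
  then show ?thesis
    unfolding Kpoints_def Ksub_def using assms(2) by (intro CollectI exI[of _ "{w}"]) simp
qed

lemma Kpoints_nonzero:
  assumes "is_subfield K" "finite K" "P \<in> Kpoints K n"
  shows "\<exists>p\<in>P. p \<noteq> 0"
proof (rule ccontr)
  assume "\<not> ?thesis"
  then have "P \<subseteq> {0}" by blast
  then have "card P \<le> 1" using card_mono[of "{0}" P] by simp
  moreover have "card P = card K" using card_Ksub[OF assms(1)] assms(3) unfolding Kpoints_def by simp
  ultimately show False using card_subfield_ge_2[OF assms(1,2)] by simp
qed

section \<open>Meeting the cone\<close>

lemma blocking_in_meets_subspace:
  assumes "blocking_in K n Gamma 2 Bbar" "is_subfield K" "finite K"
    and "Ksubspace K S" "S \<subseteq> Gamma" "Gamma \<subseteq> vecs n" "card K ^ 2 \<le> card S"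
  shows "\<exists>P\<in>Bbar. P \<subseteq> S"
proof -
  obtain L where L: "Ksub K n L 2" "L \<subseteq> S"
    using exists_Ksub_subset[OF assms(2-4)] assms(5-7) by blast
  then have "L \<subseteq> Gamma" using assms(5) by blast
  then obtain P where "P \<in> Bbar" "P \<subseteq> L" using assms(1) L(1) unfolding blocking_in_def by blast
  then show ?thesis using L(2) by blast
qed

lemma exists_cone_vector:
  fixes K :: "'a::{field,finite} set"
  assumes K: "is_subfield K"
    and W: "Ksubspace K W" "W \<subseteq> vecs n"
    and Omega: "Ksubspace K Omega" "Omega \<subseteq> vecs n"
    and Gamma: "Ksubspace K Gamma" "Gamma \<subseteq> vecs n" "card K ^ 2 \<le> card Gamma"
    and skew: "Omega \<inter> Gamma = {0}"
    and blocking: "blocking_in K n Gamma 2 Bbar"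
    and count: "card K ^ 2 * card (vecs n :: (nat \<Rightarrow> 'a) set) \<le> card Gamma * (card W * card Omega)"
  shows "\<exists>w\<in>W. w \<noteq> 0 \<and> (\<exists>P\<in>Bbar. w \<in> Kspan K (P \<union> Omega))"
proof (cases "W \<inter> Omega = {0}")
  case False
  then obtain w where w: "w \<in> W" "w \<in> Omega" "w \<noteq> 0" using KsubspaceD(1) W(1) Omega(1) by blast
  obtain P where "P \<in> Bbar"
    using blocking_in_meets_subspace[OF blocking K finite Gamma(1) subset_refl Gamma(2,3)] by blast
  moreover have "w \<in> Kspan K (P \<union> Omega)"
    using Kspan_superset[OF is_subfieldD(2)[OF K]] w(2) by blast
  ultimately show ?thesis using w by blast
next
  case True
  define U where "U = W + Omega"
  let ?V = "vecs n :: (nat \<Rightarrow> 'a) set"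
  have fin: "finite W" "finite Omega" "finite Gamma"
    using W(2) Omega(2) Gamma(2) finite_vecs finite_subset by blast+
  have groups: "add_subgroup W" "add_subgroup Omega" "add_subgroup Gamma"
    using Ksubspace_add_subgroup[OF K] W(1) Omega(1) Gamma(1) by blast+
  have U: "Ksubspace K U" "U \<subseteq> vecs n"
    unfolding U_def using Ksubspace_set_plus W Omega set_plus_vecs by blast+
  have "card ?V * card K ^ 2 \<le> card Gamma * (card W * card Omega)"
    using count by (simp add: mult.commute)
  also have "\<dots> \<le> card ?V * card (Gamma \<inter> U)"
    using card_mult_le_card_Int[OF groups(3) Ksubspace_add_subgroup[OF K U(1)] fin(3) _ finite_vecs[of n]]
      card_set_plus_Int_zero[OF groups(1,2) fin(1,2) True] set_plus_vecs[OF Gamma(2) U(2)]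
      finite_subset[OF U(2) finite_vecs[of n]]
    unfolding U_def by simp
  finally have "card ?V * card K ^ 2 \<le> card ?V * card (Gamma \<inter> U)" .
  moreover have "0 < card ?V"
    using KsubspaceD(1)[OF Ksubspace_vecs] finite_vecs card_gt_0_iff by blast
  ultimately have "card K ^ 2 \<le> card (Gamma \<inter> U)" by simp
  then obtain P where P: "P \<in> Bbar" "P \<subseteq> Gamma \<inter> U"
    using blocking_in_meets_subspace[OF blocking K finite Ksubspace_Int[OF Gamma(1) U(1)] _ Gamma(2)] by blast
  have "P \<in> Kpoints K n" using P(1) blocking unfolding blocking_in_def by blast
  then obtain p where p: "p \<in> P" "p \<noteq> 0" using Kpoints_nonzero[OF K finite] by blast
  then obtain w v where wv: "w \<in> W" "v \<in> Omega" "p = w + v"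
    using P(2) unfolding U_def by (blast elim: set_plus_elim)
  have "w \<noteq> 0" using wv p P(2) skew by auto
  moreover have "w \<in> Kspan K (P \<union> Omega)"
  proof -
    have "p \<in> Kspan K (P \<union> Omega)" "v \<in> Kspan K (P \<union> Omega)"
      using Kspan_superset[OF is_subfieldD(2)[OF K]] p(1) wv(2) by blast+
    then have "p - v \<in> Kspan K (P \<union> Omega)"
      using add_subgroup_diff[OF Ksubspace_add_subgroup[OF K Ksubspace_Kspan[OF K]]] by blast
    then show ?thesis using wv(3) by simp
  qed
  ultimately show ?thesis using wv(1) P(1) by blast
qed

lemma Kspan_in_BU_cone:
  assumes "is_subfield K" "w \<in> vecs n" "w \<noteq> 0" "P \<in> Bbar" "w \<in> Kspan K (P \<union> Omega)"
  shows "Kspan UNIV {w} \<in> BU n (cone K n Omega Bbar)"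
proof -
  have "Kspan K {w} \<subseteq> Kspan K (P \<union> Omega)"
    using Kspan_least[OF Ksubspace_Kspan[OF assms(1)]] assms(5) by blast
  then have "Kspan K {w} \<in> cone K n Omega Bbar"
    unfolding cone_def using Kspan_singleton_in_Kpoints[OF assms(1-3)] assms(4) by blast
  then show ?thesis
    unfolding BU_def using Kspan_singleton_in_Kpoints[OF is_subfield_UNIV assms(2,3)] Kspan_subfield_mono
    by blast
qed

lemma blocking_in_BU_cone:
  fixes K :: "'a::{field,finite} set"
  assumes K: "is_subfield K"
    and Omega: "Ksubspace K Omega" "Omega \<subseteq> vecs n"
    and Gamma: "Ksubspace K Gamma" "Gamma \<subseteq> vecs n" "card K ^ 2 \<le> card Gamma"
    and skew: "Omega \<inter> Gamma = {0}"
    and blocking: "blocking_in K n Gamma 2 Bbar"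
    and count: "card K ^ 2 * card (vecs n :: (nat \<Rightarrow> 'a) set)
      \<le> card Gamma * (card (UNIV :: 'a set) ^ k * card Omega)"
  shows "blocking_in UNIV n UNIV k (BU n (cone K n Omega Bbar))"
proof -
  have "\<exists>X\<in>BU n (cone K n Omega Bbar). X \<subseteq> W" if W: "Ksub UNIV n W k" for W
  proof -
    have W': "Ksubspace UNIV W" "W \<subseteq> vecs n" "card W = card (UNIV :: 'a set) ^ k"
      using Ksub_Ksubspace[OF is_subfield_UNIV W] Ksub_subset_vecs[OF W] card_Ksub[OF is_subfield_UNIV W]
      by simp_all
    obtain w P where w: "w \<in> W" "w \<noteq> 0" "P \<in> Bbar" "w \<in> Kspan K (P \<union> Omega)"
      using exists_cone_vector[OF K Ksubspace_subfield_mono[OF W'(1)] W'(2) Omega Gamma skew blocking]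
        count W'(3) by auto
    have "Kspan UNIV {w} \<in> BU n (cone K n Omega Bbar)"
      using Kspan_in_BU_cone[OF K _ w(2-4)] w(1) W'(2) by blast
    moreover have "Kspan UNIV {w} \<subseteq> W" using Kspan_least[OF W'(1)] w(1) by blast
    ultimately show ?thesis by blast
  qed
  moreover have "BU n (cone K n Omega Bbar) \<subseteq> {P \<in> Kpoints UNIV n. P \<subseteq> UNIV}"
    unfolding BU_def by blast
  ultimately show ?thesis unfolding blocking_in_def by blast
qed

lemma cone_dimension_count:
  fixes q :: nat
  assumes "0 < k" "k < n" "0 < t"
  shows "q ^ 2 * (q ^ t) ^ n = q ^ 3 * ((q ^ t) ^ k * q ^ (n * t - k * t - 1))"
proof -
  have "k * t < n * t" "0 < k * t" using assms by simp_all
  then have exps: "2 + n * t = 3 + (k * t + (n * t - k * t - 1))" by linarith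
  have powers: "q ^ (m * t) = (q ^ t) ^ m" for m by (simp add: power_mult[symmetric] mult.commute)
  have "q ^ 2 * (q ^ t) ^ n = q ^ (2 + n * t)" by (simp only: power_add powers)
  also have "\<dots> = q ^ 3 * ((q ^ t) ^ k * q ^ (n * t - k * t - 1))"
    unfolding exps by (simp only: power_add powers)
  finally show ?thesis .
qed

theorem lemma4p1:
  fixes K :: "'a::{field,finite} set"
    and n k t q :: nat
    and Omega Gamma :: "(nat \<Rightarrow> 'a) set"
    and Bbar :: "(nat \<Rightarrow> 'a) set set"
  assumes "0 < n" "0 < k" "0 < t" "k < n"
    and "prime_power q"
    and "is_subfield K" "card K = q" "card (UNIV :: 'a set) = q ^ t"
    and "Ksub K n Omega (n*t - k*t - 1)"
    and "Ksub K n Gamma 3"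
    and "Omega \<inter> Gamma = {\<lambda>_. 0}"
    and "blocking_in K n Gamma 2 Bbar"
  shows "blocking_in UNIV n UNIV k (BU n (cone K n Omega Bbar))"
proof (rule blocking_in_BU_cone[OF assms(6) _ _ _ _ _ _ assms(12)])
  note K = assms(6)
  show "Ksubspace K Omega" "Omega \<subseteq> vecs n" "Ksubspace K Gamma" "Gamma \<subseteq> vecs n"
    using Ksub_Ksubspace[OF K] Ksub_subset_vecs assms(9,10) by blast+
  have card: "card Omega = q ^ (n * t - k * t - 1)" "card Gamma = q ^ 3"
    using card_Ksub[OF K] assms(7,9,10) by simp_all
  then show "card K ^ 2 \<le> card Gamma"
    using card_subfield_ge_2[OF K finite] assms(7) by (simp add: power_increasing)
  show "Omega \<inter> Gamma = {0}" using assms(11) by (simp add: zero_fun_def)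
  have "card K ^ 2 * card (vecs n :: (nat \<Rightarrow> 'a) set) \<le> q ^ 2 * (q ^ t) ^ n"
    using card_vecs_le[of n, where 'a = 'a] assms(7,8) by simp
  then show "card K ^ 2 * card (vecs n :: (nat \<Rightarrow> 'a) set)
      \<le> card Gamma * (card (UNIV :: 'a set) ^ k * card Omega)"
    using cone_dimension_count[OF assms(2,4,3)] card assms(8) by simp
qed

end
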